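(* For all real $y$, $$\sum_{k=0}^{4}g_{5k}^2(y)=\frac15e^{2y}+\frac25e^{(\sqrt5-1)y/2}+\frac25e^{-(\sqrt5+1)y/2}.$$
   Context: The polar 5-dimensional cosexponential functions are $g_{5k}(y)=\sum_{p=0}^\infty \frac{y^{k+5p}}{(k+5p)!}$ for $k=0,\dots,4$ and real $y$. *)

theory Defs
  imports "HOL-Analysis.Analysis"
begin

definition g5 :: "nat \<Rightarrow> real \<Rightarrow> real" where
  "g5 k y = (\<Sum>p. y ^ (k + 5 * p) / fact (k + 5 * p))"

end

theory Submission
  imports Defs "HOL-Library.Real_Mod"
begin

text \<open>Let w = cis (2 pi / n). Series multisection gives
  g_nk(y) = (1/n) \<Sum>j<n. w^(-jk) exp (w^j y), so up to the factor 1/n the real vector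
  (g_nk(y))_k is the discrete Fourier transform of (exp (w^j y))_j. Since the g_nk(y) are real,
  Parseval's identity for the DFT gives
  \<Sum>k<n. g_nk(y)^2 = (1/n) \<Sum>j<n. |exp (w^j y)|^2 = (1/n) \<Sum>j<n. exp (2 cos (2 pi j / n) y).
  For n = 5 the vanishing sum of the fifth roots of unity, together with cos (4 pi / 5) =
  2 cos (2 pi / 5)^2 - 1, yields cos (2 pi / 5) = (sqrt 5 - 1) / 4 and
  cos (4 pi / 5) = - (sqrt 5 + 1) / 4.\<close>

lemma cis_2pi_div_eq_1_iff:
  fixes d :: int
  assumes "n > 0"
  shows "cis (2 * pi * d / n) = 1 \<longleftrightarrow> int n dvd d"
proof
  assume "cis (2 * pi * d / n) = 1"
  then obtain m :: int where "2 * pi * d / n = m * (2 * pi)"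
    by (auto simp: cis_eq_1_iff)
  with assms have "real_of_int d = real_of_int (m * int n)"
    by (simp add: field_simps)
  then show "int n dvd d"
    by (simp only: of_int_eq_iff) simp
next
  assume "int n dvd d"
  then obtain m where "d = int n * m" ..
  with assms have "2 * pi * d / n = 2 * pi * real_of_int m"
    by simp
  then show "cis (2 * pi * d / n) = 1"
    by simp
qed

lemma sum_cis_2pi_multiples:
  fixes d :: int
  assumes "n > 0"
  shows "(\<Sum>k<n. cis (2 * pi * real k * d / n)) = (if int n dvd d then of_nat n else 0)"
proof -
  define z where "z = cis (2 * pi * d / n)"
  have powers: "(\<Sum>k<n. cis (2 * pi * real k * d / n)) = (\<Sum>k<n. z ^ k)"
    by (intro sum.cong refl) (simp add: z_def Complex.DeMoivre mult_ac)
  show ?thesis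
  proof (cases "int n dvd d")
    case True
    then have "z = 1"
      using assms by (simp add: z_def cis_2pi_div_eq_1_iff)
    with True show ?thesis
      by (simp add: powers)
  next
    case False
    have "z ^ n = 1"
      using assms by (simp add: z_def Complex.DeMoivre)
    moreover have "z \<noteq> 1"
      using False assms by (simp add: z_def cis_2pi_div_eq_1_iff)
    ultimately show ?thesis
      using False by (simp add: powers geometric_sum)
  qed
qed

definition cosexp :: "nat \<Rightarrow> nat \<Rightarrow> real \<Rightarrow> real" where
  "cosexp n k y = (\<Sum>p. y ^ (k + n * p) / fact (k + n * p))"

lemma sums_arith_progression_iff:
  fixes a :: "nat \<Rightarrow> 'a::real_normed_vector"
  assumes "k < n"
  shows "(\<lambda>p. a (k + n * p)) sums s \<longleftrightarrow> (\<lambda>m. if m mod n = k then a m else 0) sums s"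
proof -
  have "strict_mono (\<lambda>p. k + n * p)"
    using assms by (auto simp: strict_mono_def)
  moreover have "m \<in> range (\<lambda>p. k + n * p)" if "m mod n = k" for m
    using div_mult_mod_eq[of m n] that by (metis add.commute mult.commute rangeI)
  ultimately have "(\<lambda>p. if (k + n * p) mod n = k then a (k + n * p) else 0) sums s
      \<longleftrightarrow> (\<lambda>m. if m mod n = k then a m else 0) sums s"
    by (intro sums_mono_reindex) auto
  with assms show ?thesis
    by simp
qed

lemma cosexp_multisection:
  assumes "k < n"
  shows "complex_of_real (cosexp n k y) =
    (\<Sum>j<n. cis (- 2 * pi * real j * real k / n) * exp (cis (2 * pi * real j / n) * y)) / n"
    (is "_ = ?S / _")
proof -
  have "n > 0"
    using assms by simp
  have "(\<lambda>m. \<Sum>j<n. cis (- 2 * pi * real j * real k / n) * ((cis (2 * pi * real j / n) * y) ^ m /\<^sub>R fact m))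
      sums ?S"
    by (intro sums_sum sums_mult exp_converges)
  moreover have "(\<Sum>j<n. cis (- 2 * pi * real j * real k / n) * ((cis (2 * pi * real j / n) * y) ^ m /\<^sub>R fact m))
      = n * (if m mod n = k then complex_of_real (y ^ m / fact m) else 0)" for m
  proof -
    have "(\<Sum>j<n. cis (- 2 * pi * real j * real k / n) * ((cis (2 * pi * real j / n) * y) ^ m /\<^sub>R fact m))
        = (\<Sum>j<n. cis (2 * pi * real j * of_int (int m - int k) / n)) * complex_of_real (y ^ m / fact m)"
      unfolding sum_distrib_right
      by (intro sum.cong refl)
        (simp add: power_mult_distrib Complex.DeMoivre cis_mult scaleR_conv_of_real field_simps)
    also have "\<dots> = (if int n dvd int m - int k then of_nat n else 0) * complex_of_real (y ^ m / fact m)"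
      by (simp only: sum_cis_2pi_multiples[OF \<open>n > 0\<close>])
    also have "int n dvd int m - int k \<longleftrightarrow> m mod n = k"
      using assms by (simp add: mod_eq_dvd_iff[symmetric] flip: zmod_int)
    finally show ?thesis
      by simp
  qed
  ultimately have "(\<lambda>m. n * (if m mod n = k then complex_of_real (y ^ m / fact m) else 0)) sums ?S"
    by simp
  then have "(\<lambda>m. if m mod n = k then complex_of_real (y ^ m / fact m) else 0) sums (?S / n)"
    using \<open>n > 0\<close> sums_mult_iff[of "of_nat n :: complex" _ "?S / n"] by simp
  then have progression: "(\<lambda>p. complex_of_real (y ^ (k + n * p) / fact (k + n * p))) sums (?S / n)"
    by (simp only: sums_arith_progression_iff[OF assms, where a = "\<lambda>m. complex_of_real (y ^ m / fact m)"])
  moreover have "(\<lambda>p. complex_of_real (y ^ (k + n * p) / fact (k + n * p))) sums cosexp n k y"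
    using progression unfolding cosexp_def
    by (intro sums_of_real summable_sums) (simp flip: summable_complex_of_real add: sums_summable)
  ultimately show ?thesis
    using sums_unique2 by blast
qed

lemma dft_parseval:
  fixes E :: "nat \<Rightarrow> complex"
  assumes "n > 0"
  shows "(\<Sum>k<n. (cmod (\<Sum>j<n. cis (- 2 * pi * real j * real k / n) * E j))\<^sup>2)
    = n * (\<Sum>j<n. (cmod (E j))\<^sup>2)"
proof -
  have diagonal: "int n dvd int l - int j \<longleftrightarrow> l = j" if "j < n" "l < n" for j l
    using that by (simp add: mod_eq_dvd_iff[symmetric] flip: zmod_int)
  have "complex_of_real (\<Sum>k<n. (cmod (\<Sum>j<n. cis (- 2 * pi * real j * real k / n) * E j))\<^sup>2)
      = (\<Sum>k<n. (\<Sum>j<n. cis (- 2 * pi * real j * real k / n) * E j)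
          * cnj (\<Sum>l<n. cis (- 2 * pi * real l * real k / n) * E l))"
    by (simp only: of_real_sum complex_norm_square)
  also have "\<dots> = (\<Sum>k<n. \<Sum>j<n. \<Sum>l<n.
      cis (2 * pi * real k * of_int (int l - int j) / n) * (E j * cnj (E l)))"
  proof -
    have twiddle: "cis (- 2 * pi * real j * real k / n) * cnj (cis (- 2 * pi * real l * real k / n))
        = cis (2 * pi * real k * of_int (int l - int j) / n)" for j k l :: nat
      unfolding cis_cnj cis_mult by (simp add: field_simps diff_divide_distrib)
    \<comment> \<open>Stated for \<open>cis\<close> factors only: the general form is permutative and would be
      rejected by ordered rewriting.\<close>
    have regroup: "cis a * e * (cnj (cis b) * f) = (cis a * cnj (cis b)) * (e * f)" for a b e f
      by (simp only: ac_simps)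
    show ?thesis
      unfolding sum_product cnj_sum complex_cnj_mult regroup twiddle ..
  qed
  also have "\<dots> = (\<Sum>j<n. \<Sum>l<n. (\<Sum>k<n. cis (2 * pi * real k * of_int (int l - int j) / n))
      * (E j * cnj (E l)))"
    unfolding sum_distrib_right
    by (rule trans[OF sum.swap]) (rule sum.cong[OF refl], rule sum.swap)
  also have "\<dots> = (\<Sum>j<n. \<Sum>l<n. if l = j then n * (E j * cnj (E l)) else 0)"
    by (intro sum.cong refl) (simp only: sum_cis_2pi_multiples[OF assms], simp add: diagonal)
  also have "\<dots> = (\<Sum>j<n. n * (E j * cnj (E j)))"
    by simp
  also have "\<dots> = complex_of_real (n * (\<Sum>j<n. (cmod (E j))\<^sup>2))"
    by (simp only: of_real_mult of_real_of_nat_eq of_real_sum complex_norm_square sum_distrib_left)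
  finally show ?thesis
    by (simp only: of_real_eq_iff)
qed

lemma sum_cosexp_squares:
  assumes "n > 0"
  shows "(\<Sum>k<n. (cosexp n k y)\<^sup>2) = (\<Sum>j<n. exp (2 * cos (2 * pi * real j / n) * y)) / n"
proof -
  define E where "E j = exp (cis (2 * pi * real j / n) * complex_of_real y)" for j
  have "(cosexp n k y)\<^sup>2 = (cmod (\<Sum>j<n. cis (- 2 * pi * real j * real k / n) * E j))\<^sup>2 / n\<^sup>2"
    if "k < n" for k
  proof -
    have "(cosexp n k y)\<^sup>2 = (cmod (complex_of_real (cosexp n k y)))\<^sup>2"
      by simp
    also have "\<dots> = (cmod ((\<Sum>j<n. cis (- 2 * pi * real j * real k / n) * E j) / n))\<^sup>2"
      unfolding cosexp_multisection[OF that] E_def ..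
    finally show ?thesis
      by (simp add: norm_divide power_divide)
  qed
  then have "(\<Sum>k<n. (cosexp n k y)\<^sup>2)
      = (\<Sum>k<n. (cmod (\<Sum>j<n. cis (- 2 * pi * real j * real k / n) * E j))\<^sup>2) / n\<^sup>2"
    by (simp add: sum_divide_distrib)
  also have "\<dots> = n * (\<Sum>j<n. (cmod (E j))\<^sup>2) / n\<^sup>2"
    by (simp only: dft_parseval[OF assms])
  finally show ?thesis
    by (simp add: E_def power2_eq_square mult_ac flip: exp_add)
qed

lemma cos_2pi_fifths:
  "cos (2 * pi / 5) = (sqrt 5 - 1) / 4"
  "cos (4 * pi / 5) = - (sqrt 5 + 1) / 4"
  "cos (6 * pi / 5) = - (sqrt 5 + 1) / 4"
  "cos (8 * pi / 5) = (sqrt 5 - 1) / 4"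
proof -
  define c where "c = cos (2 * pi / 5)"
  have symmetric: "cos (6 * pi / 5) = cos (4 * pi / 5)" "cos (8 * pi / 5) = c"
    using cos_2pi_minus[of "4 * pi / 5"] cos_2pi_minus[of "2 * pi / 5"] by (simp_all add: c_def)
  have "(\<Sum>k<5. cis (2 * pi * real k * of_int 1 / 5)) = 0"
    using sum_cis_2pi_multiples[of 5 1] by simp
  then have "(\<Sum>k<5. cos (2 * pi * real k / 5)) = 0"
    by (simp add: complex_eq_iff)
  then have root_sum: "1 + 2 * c + 2 * cos (4 * pi / 5) = 0"
    by (simp add: eval_nat_numeral symmetric c_def)
  have "cos (4 * pi / 5) = 2 * c\<^sup>2 - 1"
    using cos_double_cos[of "2 * pi / 5"] by (simp add: c_def)
  with root_sum have "(4 * c + 1)\<^sup>2 = 5"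
    by (simp add: power2_eq_square algebra_simps)
  moreover have "c > 0"
    unfolding c_def by (rule cos_gt_zero) auto
  ultimately have "sqrt 5 = 4 * c + 1"
    by (intro real_sqrt_unique) auto
  with root_sum symmetric show
    "cos (2 * pi / 5) = (sqrt 5 - 1) / 4"
    "cos (4 * pi / 5) = - (sqrt 5 + 1) / 4"
    "cos (6 * pi / 5) = - (sqrt 5 + 1) / 4"
    "cos (8 * pi / 5) = (sqrt 5 - 1) / 4"
    by (simp_all add: c_def field_simps)
qed

theorem mainTheorem4:
  fixes y :: real
  shows "(\<Sum>k\<le>4. (g5 k y)\<^sup>2) =
    exp (2 * y) / 5 + 2 / 5 * exp ((sqrt 5 - 1) * y / 2)
      + 2 / 5 * exp (- ((sqrt 5 + 1) * y / 2))"
proof -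
  have "(\<Sum>k\<le>4. (g5 k y)\<^sup>2) = (\<Sum>k<5. (cosexp 5 k y)\<^sup>2)"
    by (simp add: g5_def cosexp_def lessThan_Suc_atMost[symmetric])
  also have "\<dots> = (\<Sum>j<5. exp (2 * cos (2 * pi * real j / 5) * y)) / 5"
    using sum_cosexp_squares[of 5 y] by simp
  also have "\<dots> = (exp (2 * y) + 2 * exp (2 * ((sqrt 5 - 1) / 4) * y)
      + 2 * exp (2 * (- (sqrt 5 + 1) / 4) * y)) / 5"
    by (simp add: eval_nat_numeral cos_2pi_fifths)
  also have "2 * ((sqrt 5 - 1) / 4) * y = (sqrt 5 - 1) * y / 2"
    by simp
  also have "2 * (- (sqrt 5 + 1) / 4) * y = - ((sqrt 5 + 1) * y / 2)"
    by (simp add: algebra_simps)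
  finally show ?thesis
    by (simp add: add_divide_distrib)
qed

end
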